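(* Let $P$ be a commutative ring, $x,y$ a regular sequence in $P$, and $a,n,r$ integers with $a\ge0$, $n\ge1$, $0\le r\le n-1$; let $f=x^n+y^n$ and $N=an+r$. Assume $f$ is a regular element of $P$ and let $R=P/(f)$. Put $$D=\begin{bmatrix}x^{n-r}&(-1)^{a-1}y^r\\(-1)^ay^{n-r}&x^r\end{bmatrix},\qquad \check D=\begin{bmatrix}x^r&(-1)^ay^r\\(-1)^{a+1}y^{n-r}&x^{n-r}\end{bmatrix}.$$ Then $$\cdots\xrightarrow{\check D}R^2\xrightarrow{D}R^2\xrightarrow{\check D}R^2\xrightarrow{D}R^2\xrightarrow{[x^N\ y^N]}R\to R/(x^N,y^N)R\to0$$ is a resolution of $R/(x^N,y^N)R$ by free $R$-modules. *)

theory Defs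
  imports Main
begin

(* Elements of R = P/(f) are represented by elements of P; two representatives
   give the same element of R iff their difference is divisible by f.
   Elements of R^2 are represented by pairs (column vectors) in P x P. *)

definition modf :: "'a::comm_ring_1 \<Rightarrow> 'a \<Rightarrow> 'a \<Rightarrow> bool" where
  "modf f u v \<longleftrightarrow> f dvd (u - v)"

definition modf2 :: "'a::comm_ring_1 \<Rightarrow> 'a \<times> 'a \<Rightarrow> 'a \<times> 'a \<Rightarrow> bool" where
  "modf2 f w z \<longleftrightarrow> modf f (fst w) (fst z) \<and> modf f (snd w) (snd z)"

definition regular_elem :: "'a::comm_ring_1 \<Rightarrow> bool" where
  "regular_elem x \<longleftrightarrow> (\<forall>z. x * z = 0 \<longrightarrow> z = 0)"

definition regular_seq2 :: "'a::comm_ring_1 \<Rightarrow> 'a \<Rightarrow> bool" where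
  "regular_seq2 x y \<longleftrightarrow> regular_elem x \<and> (\<forall>z. x dvd (y * z) \<longrightarrow> x dvd z)
     \<and> \<not> (\<exists>u v. u * x + v * y = 1)"

definition mat2 :: "'a::comm_ring_1 \<Rightarrow> 'a \<Rightarrow> 'a \<Rightarrow> 'a \<Rightarrow> 'a \<times> 'a \<Rightarrow> 'a \<times> 'a" where
  "mat2 m11 m12 m21 m22 w = (m11 * fst w + m12 * snd w, m21 * fst w + m22 * snd w)"

(* D = [[x^(n-r), (-1)^(a-1) y^r], [(-1)^a y^(n-r), x^r]];
   note (-1)^(a-1) = (-1)^(a+1) for every integer a (in particular a = 0). *)
definition matD :: "nat \<Rightarrow> nat \<Rightarrow> nat \<Rightarrow> 'a::comm_ring_1 \<Rightarrow> 'a \<Rightarrow> 'a \<times> 'a \<Rightarrow> 'a \<times> 'a" where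
  "matD a n r x y = mat2 (x ^ (n - r)) ((-1) ^ (a + 1) * y ^ r) ((-1) ^ a * y ^ (n - r)) (x ^ r)"

definition matDc :: "nat \<Rightarrow> nat \<Rightarrow> nat \<Rightarrow> 'a::comm_ring_1 \<Rightarrow> 'a \<Rightarrow> 'a \<times> 'a \<Rightarrow> 'a \<times> 'a" where
  "matDc a n r x y = mat2 (x ^ r) ((-1) ^ a * y ^ r) ((-1) ^ (a + 1) * y ^ (n - r)) (x ^ (n - r))"

(* The differentials d_k : R^2 \<rightarrow> R^2 for k \<ge> 2 of the complex
   ... --Dc--> R^2 --D--> R^2 --Dc--> R^2 --D--> R^2 --[x^N y^N]--> R :
   d_2 = D, d_3 = Dc, d_4 = D, ... *)
definition dk :: "nat \<Rightarrow> nat \<Rightarrow> nat \<Rightarrow> 'a::comm_ring_1 \<Rightarrow> 'a \<Rightarrow> nat \<Rightarrow> 'a \<times> 'a \<Rightarrow> 'a \<times> 'a" where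
  "dk a n r x y k = (if even k then matD a n r x y else matDc a n r x y)"

definition row1 :: "nat \<Rightarrow> 'a::comm_ring_1 \<Rightarrow> 'a \<Rightarrow> 'a \<times> 'a \<Rightarrow> 'a" where
  "row1 N x y w = x ^ N * fst w + y ^ N * snd w"

(* ideal (x^N, y^N)R of R, pulled back to P: (x^N, y^N, f)P *)
definition idealN :: "nat \<Rightarrow> 'a::comm_ring_1 \<Rightarrow> 'a \<Rightarrow> 'a \<Rightarrow> 'a set" where
  "idealN N f x y = {c. \<exists>u v w. c = u * x ^ N + v * y ^ N + w * f}"

end

theory Submission
  imports Defs
begin

(* Let p = x^(n-r), q = x^r, u = y^r, v = y^(n-r) and s = (-1)^a, so that
   D = [[p, -s u], [s v, q]], Dc is the adjugate [[q, s u], [-s v, p]] of D, and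
   det D = p q + u v = f.  The proof has three independent parts.
   - Exactness at R is a mere reformulation of the ideal (x^N, y^N, f)P.
   - For k >= 2 the maps d_k alternate between D and its adjugate.  For any 2x2
     matrix M whose determinant d is regular, M and adj M form a matrix
     factorization of d (M adj M = adj M M = d I), and such a pair is exact over
     P/(d) in both orders.
   - Exactness at the first R^2 uses x^(an) = s y^(an) mod f: a vector w with
     x^N w1 + y^N w2 = 0 mod f satisfies y^(an) (s q w1 + u w2) = 0 mod f.  Since
     y is a nonzerodivisor modulo f, f divides s q w1 + u w2, and the Koszul
     syzygy of the regular sequence x^r, y^r then exhibits w as D applied to an
     explicit vector, already in P. *)

section \<open>Regular elements and nonzerodivisors modulo an element\<close>

definition nzd_mod :: "'a::comm_ring_1 \<Rightarrow> 'a \<Rightarrow> bool" where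
  "nzd_mod c y \<longleftrightarrow> (\<forall>z. c dvd y * z \<longrightarrow> c dvd z)"

lemma nzd_modD: "nzd_mod c y \<Longrightarrow> c dvd y * z \<Longrightarrow> c dvd z"
  unfolding nzd_mod_def by blast

(* The two properties of a regular sequence the proof needs. *)
lemma regular_seq2_imp:
  "regular_seq2 x y \<Longrightarrow> regular_elem x \<and> nzd_mod x y"
  unfolding regular_seq2_def nzd_mod_def by blast

lemma regular_cancel: "regular_elem c \<Longrightarrow> c * p = c * q \<Longrightarrow> p = q"
  unfolding regular_elem_def by (metis eq_iff_diff_eq_0 right_diff_distrib)

lemma regular_power:
  assumes "regular_elem c"
  shows "regular_elem (c ^ m)"
proof (induction m)
  case 0 then show ?case by (simp add: regular_elem_def)
next
  case (Suc m)
  show ?case unfolding regular_elem_def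
  proof (intro allI impI)
    fix z assume "c ^ Suc m * z = 0"
    then have "c * (c ^ m * z) = 0" by (simp add: mult.assoc)
    then have "c ^ m * z = 0" using assms by (simp add: regular_elem_def)
    then show "z = 0" using Suc.IH by (simp add: regular_elem_def)
  qed
qed

lemma nzd_mod_power:
  assumes "nzd_mod c y"
  shows "nzd_mod c (y ^ k)"
proof (induction k)
  case 0 then show ?case by (simp add: nzd_mod_def)
next
  case (Suc k)
  show ?case unfolding nzd_mod_def
  proof (intro allI impI)
    fix z assume "c dvd y ^ Suc k * z"
    then have "c dvd y * (y ^ k * z)" by (simp add: mult.assoc)
    then have "c dvd y ^ k * z" by (rule nzd_modD[OF assms])
    then show "c dvd z" by (rule nzd_modD[OF Suc.IH])
  qed
qed

lemma nzd_mod_power_modulus: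
  assumes reg: "regular_elem x" and nzd: "nzd_mod x y"
  shows "nzd_mod (x ^ m) y"
proof (induction m)
  case 0 then show ?case by (simp add: nzd_mod_def)
next
  case (Suc m)
  show ?case unfolding nzd_mod_def
  proof (intro allI impI)
    fix g assume dvd: "x ^ Suc m dvd y * g"
    then have "x dvd y * g" by (rule dvd_trans[rotated]) simp
    then have "x dvd g" by (rule nzd_modD[OF nzd])
    then obtain g' where g: "g = x * g'" by (rule dvdE)
    obtain t where "y * g = x ^ Suc m * t" using dvd by (rule dvdE)
    then have "x * (y * g') = x * (x ^ m * t)" by (simp add: g algebra_simps)
    then have "y * g' = x ^ m * t" by (rule regular_cancel[OF reg])
    then have "x ^ m dvd g'" using Suc.IH by (simp add: nzd_modD)
    then show "x ^ Suc m dvd g" by (simp add: g mult_dvd_mono)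
  qed
qed

lemma regular_seq2_syzygy:
  assumes "regular_seq2 x y" and rel: "x ^ i * u = y ^ j * v"
  obtains h where "u = y ^ j * h" and "v = x ^ i * h"
proof -
  have reg: "regular_elem x" and nzd: "nzd_mod x y"
    using regular_seq2_imp[OF assms(1)] by blast+
  have "nzd_mod (x ^ i) (y ^ j)"
    by (rule nzd_mod_power[OF nzd_mod_power_modulus[OF reg nzd]])
  moreover have "x ^ i dvd y ^ j * v" by (simp add: rel[symmetric])
  ultimately have "x ^ i dvd v" by (rule nzd_modD)
  then obtain h where v: "v = x ^ i * h" by (rule dvdE)
  have "x ^ i * u = x ^ i * (y ^ j * h)" using rel unfolding v by (simp add: mult.left_commute)
  then have "u = y ^ j * h" by (rule regular_cancel[OF regular_power[OF reg]])
  then show thesis using v by (rule that)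
qed

lemma nzd_mod_add_power:
  assumes reg: "regular_elem c" and nzd: "nzd_mod c y" and "n \<ge> 1"
  shows "nzd_mod (c + y ^ n) y"
  unfolding nzd_mod_def
proof (intro allI impI)
  fix g assume "(c + y ^ n) dvd y * g"
  then obtain t where t: "y * g = (c + y ^ n) * t" by (rule dvdE)
  have yn: "y ^ n = y * y ^ (n - 1)" using \<open>n \<ge> 1\<close> by (cases n) auto
  have "y * (g - y ^ (n - 1) * t) = c * t"
    using t by (simp add: yn algebra_simps)
  then have "c dvd y * (g - y ^ (n - 1) * t)" by simp
  then have "c dvd g - y ^ (n - 1) * t" by (rule nzd_modD[OF nzd])
  then obtain h where "g - y ^ (n - 1) * t = c * h" by (rule dvdE)
  then have h: "g = c * h + y ^ (n - 1) * t" by (simp add: algebra_simps)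
  have "c * t = c * (y * h)" using t by (simp add: h yn algebra_simps)
  then have "t = y * h" by (rule regular_cancel[OF reg])
  then have "g = (c + y ^ n) * h" by (simp add: h yn algebra_simps)
  then show "(c + y ^ n) dvd g" by simp
qed

lemma diff_dvd_power_diff: "((p::'a::comm_ring_1) - q) dvd (p ^ k - q ^ k)"
proof (induction k)
  case 0 then show ?case by simp
next
  case (Suc k)
  have "p ^ Suc k - q ^ Suc k = p * (p ^ k - q ^ k) + q ^ k * (p - q)"
    by (simp add: algebra_simps)
  then show ?case using Suc by simp
qed

(* The basic congruence of R: x^(an) = (-1)^a y^(an) modulo x^n + y^n. *)
lemma sum_dvd_power_diff: "((X::'a::comm_ring_1) + Y) dvd X ^ a - (-1) ^ a * Y ^ a"
  using diff_dvd_power_diff[of X "- Y" a] by (simp add: power_minus')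

lemma modf2_mat2:
  assumes "modf2 f w w'"
  shows "modf2 f (mat2 m11 m12 m21 m22 w) (mat2 m11 m12 m21 m22 w')"
proof -
  have "f dvd fst w - fst w'" "f dvd snd w - snd w'"
    using assms by (simp_all add: modf2_def modf_def)
  moreover have "fst (mat2 m11 m12 m21 m22 w) - fst (mat2 m11 m12 m21 m22 w')
      = m11 * (fst w - fst w') + m12 * (snd w - snd w')"
    "snd (mat2 m11 m12 m21 m22 w) - snd (mat2 m11 m12 m21 m22 w')
      = m21 * (fst w - fst w') + m22 * (snd w - snd w')"
    by (simp_all add: mat2_def algebra_simps)
  ultimately show ?thesis by (simp add: modf2_def modf_def)
qed

lemma modf_row1: "modf2 f w w' \<Longrightarrow> modf f (row1 N x y w) (row1 N x y w')"
  using modf2_mat2[of f w w' "x ^ N" "y ^ N" 0 0]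
  by (simp add: modf2_def row1_def mat2_def)

section \<open>Matrix factorizations by the adjugate\<close>

lemma mat2_adjugate:
  "mat2 p b c q (mat2 q (- b) (- c) p z) = ((p * q - b * c) * fst z, (p * q - b * c) * snd z)"
  by (simp add: mat2_def algebra_simps)

lemma mat2_scale:
  "mat2 m11 m12 m21 m22 (d * v1, d * v2)
     = (d * fst (mat2 m11 m12 m21 m22 (v1, v2)), d * snd (mat2 m11 m12 m21 m22 (v1, v2)))"
  by (simp add: mat2_def algebra_simps)

lemma modf2_multiple:
  "modf2 f w (f * t1, f * t2) \<longleftrightarrow> modf2 f w (0, 0)"
proof -
  have "modf f u (f * t) \<longleftrightarrow> modf f u 0" for u t :: 'a
    unfolding modf_def
    by (metis diff_zero dvd_add_times_triv_right_iff diff_conv_add_uminus mult.commute mult_minus_left)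
  then show ?thesis by (simp add: modf2_def)
qed

lemma adjugate_exact:
  fixes p q b c :: "'a::comm_ring_1"
  defines "d \<equiv> p * q - b * c"
  assumes reg: "regular_elem d"
  shows "modf2 d (mat2 p b c q w) (0, 0) \<longleftrightarrow> (\<exists>z. modf2 d w (mat2 q (- b) (- c) p z))"
proof
  assume "modf2 d (mat2 p b c q w) (0, 0)"
  then have "d dvd fst (mat2 p b c q w)" "d dvd snd (mat2 p b c q w)"
    by (simp_all add: modf2_def modf_def)
  then obtain v1 v2 where "fst (mat2 p b c q w) = d * v1" "snd (mat2 p b c q w) = d * v2"
    by (elim dvdE)
  then have v: "mat2 p b c q w = (d * v1, d * v2)" by (simp add: prod_eq_iff)
  have "(d * fst w, d * snd w) = mat2 q (- b) (- c) p (mat2 p b c q w)"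
    using mat2_adjugate[of q "- b" "- c" p w] by (simp add: d_def mult.commute)
  also have "\<dots> = (d * fst (mat2 q (- b) (- c) p (v1, v2)), d * snd (mat2 q (- b) (- c) p (v1, v2)))"
    by (simp only: v mat2_scale)
  finally have "w = mat2 q (- b) (- c) p (v1, v2)"
    using regular_cancel[OF reg] by (simp add: prod_eq_iff)
  then show "\<exists>z. modf2 d w (mat2 q (- b) (- c) p z)"
    by (intro exI[of _ "(v1, v2)"]) (simp add: modf2_def modf_def)
next
  assume "\<exists>z. modf2 d w (mat2 q (- b) (- c) p z)"
  then obtain z where "modf2 d w (mat2 q (- b) (- c) p z)" by blast
  then have "modf2 d (mat2 p b c q w) (mat2 p b c q (mat2 q (- b) (- c) p z))"
    by (rule modf2_mat2)
  then have "modf2 d (mat2 p b c q w) (d * fst z, d * snd z)"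
    by (simp only: mat2_adjugate d_def)
  then show "modf2 d (mat2 p b c q w) (0, 0)"
    by (simp only: modf2_multiple)
qed

(* The same in the other order: ker adj(M) = im M, since adj(adj M) = M. *)
lemma adjugate_exact':
  fixes p q b c :: "'a::comm_ring_1"
  assumes reg: "regular_elem (p * q - b * c)"
  shows "modf2 (p * q - b * c) (mat2 q (- b) (- c) p w) (0, 0)
           \<longleftrightarrow> (\<exists>z. modf2 (p * q - b * c) w (mat2 p b c q z))"
  using adjugate_exact[of q p "- b" "- c" w] reg by (simp add: mult.commute)

lemma matD_mat2:
  "matD a n r x y = mat2 (x ^ (n - r)) (- ((-1) ^ a * y ^ r)) ((-1) ^ a * y ^ (n - r)) (x ^ r)"
  by (simp add: matD_def)

lemma matDc_adjugate:
  "matDc a n r x y = mat2 (x ^ r) (- (- ((-1) ^ a * y ^ r))) (- ((-1) ^ a * y ^ (n - r))) (x ^ (n - r))"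
  by (simp add: matDc_def)

lemma det_matD:
  fixes x y :: "'a::comm_ring_1"
  assumes "r \<le> n"
  shows "x ^ (n - r) * x ^ r - - ((-1) ^ a * y ^ r) * ((-1) ^ a * y ^ (n - r)) = x ^ n + y ^ n"
proof -
  have "((-1::'a) ^ a) * (-1) ^ a = 1" by (simp flip: power_add)
  then have "- ((-1::'a) ^ a * y ^ r) * ((-1) ^ a * y ^ (n - r)) = - (y ^ r * y ^ (n - r))"
    by (simp add: algebra_simps)
  then show ?thesis using assms by (simp flip: power_add)
qed

lemma matD_matDc_exact:
  fixes x y :: "'a::comm_ring_1"
  assumes "r \<le> n" and reg: "regular_elem (x ^ n + y ^ n)"
  shows "modf2 (x ^ n + y ^ n) (matD a n r x y w) (0, 0) \<longleftrightarrow>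
           (\<exists>z. modf2 (x ^ n + y ^ n) w (matDc a n r x y z))"
    and "modf2 (x ^ n + y ^ n) (matDc a n r x y w) (0, 0) \<longleftrightarrow>
           (\<exists>z. modf2 (x ^ n + y ^ n) w (matD a n r x y z))"
proof -
  note det = det_matD[OF assms(1), of x a y]
  show "modf2 (x ^ n + y ^ n) (matD a n r x y w) (0, 0) \<longleftrightarrow>
          (\<exists>z. modf2 (x ^ n + y ^ n) w (matDc a n r x y z))"
    unfolding matD_mat2 matDc_adjugate
    by (rule adjugate_exact[of "x ^ (n - r)" "x ^ r" "- ((-1) ^ a * y ^ r)"
          "(-1) ^ a * y ^ (n - r)", unfolded det, OF reg])
  show "modf2 (x ^ n + y ^ n) (matDc a n r x y w) (0, 0) \<longleftrightarrow>
          (\<exists>z. modf2 (x ^ n + y ^ n) w (matD a n r x y z))"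
    unfolding matD_mat2 matDc_adjugate
    by (rule adjugate_exact'[of "x ^ (n - r)" "x ^ r" "- ((-1) ^ a * y ^ r)"
          "(-1) ^ a * y ^ (n - r)", unfolded det, OF reg])
qed

section \<open>Exactness at R and at the first copy of R^2\<close>

lemma idealN_row1_image:
  "c \<in> idealN N f x y \<longleftrightarrow> (\<exists>w. modf f c (row1 N x y w))"
proof
  assume "c \<in> idealN N f x y"
  then obtain u v t where "c = u * x ^ N + v * y ^ N + t * f"
    unfolding idealN_def mem_Collect_eq by (elim exE)
  then have "modf f c (row1 N x y (u, v))" by (simp add: modf_def row1_def algebra_simps)
  then show "\<exists>w. modf f c (row1 N x y w)" by blast
next
  assume "\<exists>w. modf f c (row1 N x y w)"
  then obtain w t where "c - row1 N x y w = f * t" unfolding modf_def by (auto elim: dvdE)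
  then have "c = fst w * x ^ N + snd w * y ^ N + t * f" by (simp add: row1_def algebra_simps)
  then show "c \<in> idealN N f x y" unfolding idealN_def by blast
qed

lemma power_an_plus_r: "(x::'a::comm_ring_1) ^ (a * n + r) = (x ^ n) ^ a * x ^ r"
proof -
  have "x ^ (a * n + r) = x ^ (n * a) * x ^ r" by (simp add: power_add mult.commute)
  then show ?thesis by (simp add: power_mult)
qed

(* [x^N y^N] D = 0 over R: writing x^(an) = (-1)^a y^(an) + (multiple of f), the
   product becomes (-1)^a y^(an) det(D) z1, and det D = f. *)
lemma row1_matD_dvd:
  fixes x y :: "'a::comm_ring_1"
  assumes "r \<le> n"
  shows "(x ^ n + y ^ n) dvd row1 (a * n + r) x y (matD a n r x y z)"
proof -
  define s :: 'a where "s = (-1) ^ a"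
  define X Y where "X = (x ^ n) ^ a" and "Y = (y ^ n) ^ a"
  define p q u v where "p = x ^ (n - r)" and "q = x ^ r" and "u = y ^ r" and "v = y ^ (n - r)"
  obtain z1 z2 where z: "z = (z1, z2)" by (cases z)
  have ss: "s * s = 1" unfolding s_def by (simp flip: power_add)
  have det: "p * q + u * v = x ^ n + y ^ n"
    using assms by (simp add: p_def q_def u_def v_def flip: power_add)
  have "row1 (a * n + r) x y (matD a n r x y z)
      = X * q * (p * z1 - s * u * z2) + Y * u * (s * v * z1 + q * z2)"
    unfolding row1_def matD_mat2 mat2_def power_an_plus_r z fst_conv snd_conv
    by (simp add: s_def X_def Y_def p_def q_def u_def v_def algebra_simps)
  also have "\<dots> = (X - s * Y) * q * (p * z1 - s * u * z2) + (p * q + u * v) * (s * Y * z1)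
      + (1 - s * s) * Y * q * u * z2"
    by (simp add: algebra_simps)
  also have "\<dots> = (X - s * Y) * q * (p * z1 - s * u * z2) + (x ^ n + y ^ n) * (s * Y * z1)"
    by (simp add: ss det)
  finally show ?thesis
    using sum_dvd_power_diff[of "x ^ n" "y ^ n" a] by (simp add: X_def Y_def s_def)
qed

(* Conversely every w with [x^N y^N] w = 0 over R is of the form D z, already in P:
   the relation reduces to f | (-1)^a x^r w1 + y^r w2, and the Koszul syzygy of
   x^r, y^r produces the preimage. *)
lemma row1_kernel_in_matD_image:
  fixes x y :: "'a::comm_ring_1"
  assumes seq: "regular_seq2 x y" and "n \<ge> 1" and "r \<le> n"
    and ker: "(x ^ n + y ^ n) dvd row1 (a * n + r) x y w"
  shows "\<exists>z. w = matD a n r x y z"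
proof -
  define f where "f = x ^ n + y ^ n"
  define s :: 'a where "s = (-1) ^ a"
  define p q u v where "p = x ^ (n - r)" and "q = x ^ r" and "u = y ^ r" and "v = y ^ (n - r)"
  obtain w1 w2 where w: "w = (w1, w2)" by (cases w)
  have ss: "s * s = 1" unfolding s_def by (simp flip: power_add)
  have det: "q * p + u * v = f"
    using \<open>r \<le> n\<close> by (simp add: f_def p_def q_def u_def v_def flip: power_add)
  have reg: "regular_elem x" and nzd: "nzd_mod x y"
    using regular_seq2_imp[OF seq] by blast+
  have nzd_f: "nzd_mod f ((y ^ n) ^ a)"
    unfolding f_def power_mult[symmetric] using nzd_mod_power nzd_mod_add_power regular_power
      nzd_mod_power_modulus reg nzd \<open>n \<ge> 1\<close> by blast
  have "row1 (a * n + r) x y w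
      = ((x ^ n) ^ a - s * (y ^ n) ^ a) * (q * w1) + (y ^ n) ^ a * (s * q * w1 + u * w2)"
    unfolding row1_def power_an_plus_r w fst_conv snd_conv
    by (simp add: q_def u_def algebra_simps)
  moreover have "f dvd ((x ^ n) ^ a - s * (y ^ n) ^ a) * (q * w1)"
    using sum_dvd_power_diff[of "x ^ n" "y ^ n" a] by (simp add: f_def s_def)
  ultimately have "f dvd (y ^ n) ^ a * (s * q * w1 + u * w2)"
    using ker by (metis f_def dvd_add_right_iff)
  then have "f dvd s * q * w1 + u * w2" by (rule nzd_modD[OF nzd_f])
  then obtain t where t: "s * q * w1 + u * w2 = f * t" by (rule dvdE)
  have "x ^ r * (s * w1 - p * t) = y ^ r * (v * t - w2)"
    using t unfolding det[symmetric] q_def[symmetric] u_def[symmetric] by (simp add: algebra_simps)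
  then obtain h where h1: "s * w1 - p * t = u * h" and h2: "v * t - w2 = q * h"
    using regular_seq2_syzygy[OF seq] unfolding q_def u_def by metis
  have sw1: "s * w1 = p * t + u * h" using h1 by (simp add: algebra_simps)
  have "p * (s * t) + - (s * u) * - h = s * (s * w1)" by (simp add: sw1 algebra_simps)
  also have "\<dots> = w1" by (simp add: ss flip: mult.assoc)
  finally have fst_eq: "p * (s * t) + - (s * u) * - h = w1" .
  have "s * v * (s * t) + q * - h = (s * s) * (v * t) - q * h" by (simp add: algebra_simps)
  also have "\<dots> = w2" using h2 by (simp add: ss algebra_simps)
  finally have snd_eq: "s * v * (s * t) + q * - h = w2" .
  have "w = mat2 p (- (s * u)) (s * v) q (s * t, - h)"
    by (simp only: w mat2_def fst_conv snd_conv fst_eq snd_eq)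
  then show ?thesis by (auto simp: matD_mat2 p_def q_def u_def v_def s_def)
qed

lemma row1_matD_exact:
  fixes x y :: "'a::comm_ring_1"
  assumes "regular_seq2 x y" and "n \<ge> 1" and "r \<le> n"
  shows "modf (x ^ n + y ^ n) (row1 (a * n + r) x y w) 0 \<longleftrightarrow>
           (\<exists>z. modf2 (x ^ n + y ^ n) w (matD a n r x y z))"
proof
  assume "modf (x ^ n + y ^ n) (row1 (a * n + r) x y w) 0"
  then have "(x ^ n + y ^ n) dvd row1 (a * n + r) x y w" by (simp add: modf_def)
  then obtain z where "w = matD a n r x y z"
    using row1_kernel_in_matD_image[OF assms] by blast
  then show "\<exists>z. modf2 (x ^ n + y ^ n) w (matD a n r x y z)"
    by (intro exI[of _ z]) (simp add: modf2_def modf_def)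
next
  assume "\<exists>z. modf2 (x ^ n + y ^ n) w (matD a n r x y z)"
  then obtain z where "modf2 (x ^ n + y ^ n) w (matD a n r x y z)" by blast
  then have "modf (x ^ n + y ^ n) (row1 (a * n + r) x y w)
               (row1 (a * n + r) x y (matD a n r x y z))"
    by (rule modf_row1)
  then show "modf (x ^ n + y ^ n) (row1 (a * n + r) x y w) 0"
    using row1_matD_dvd[OF \<open>r \<le> n\<close>, of x y a z] unfolding modf_def
    by (metis diff_add_cancel diff_zero dvd_add)
qed

theorem corollary9p3:
  fixes x y :: "'a::comm_ring_1" and a n r :: nat
  assumes "regular_seq2 x y"
    and "n \<ge> 1" and "r \<le> n - 1"
    and "regular_elem (x ^ n + y ^ n)"
  shows
    \<comment> \<open>exactness at R: the kernel of R \<rightarrow> R/(x^N,y^N)R is the image of [x^N y^N]\<close>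
    "(\<forall>c. c \<in> idealN (a * n + r) (x ^ n + y ^ n) x y \<longleftrightarrow>
          (\<exists>w. modf (x ^ n + y ^ n) c (row1 (a * n + r) x y w)))
   \<and> \<comment> \<open>exactness at the first R^2: ker [x^N y^N] = im D\<close>
     (\<forall>w. modf (x ^ n + y ^ n) (row1 (a * n + r) x y w) 0 \<longleftrightarrow>
          (\<exists>z. modf2 (x ^ n + y ^ n) w (dk a n r x y 2 z)))
   \<and> \<comment> \<open>exactness at every later R^2: ker d_k = im d_(k+1), k \<ge> 2\<close>
     (\<forall>k\<ge>2. \<forall>w. modf2 (x ^ n + y ^ n) (dk a n r x y k w) (0, 0) \<longleftrightarrow>
          (\<exists>z. modf2 (x ^ n + y ^ n) w (dk a n r x y (Suc k) z)))"
proof -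
  have rn: "r \<le> n" using assms(2,3) by simp
  \<comment> \<open>d_2 = D, and the later differentials alternate between D and its adjugate\<close>
  have first: "modf (x ^ n + y ^ n) (row1 (a * n + r) x y w) 0 \<longleftrightarrow>
      (\<exists>z. modf2 (x ^ n + y ^ n) w (dk a n r x y 2 z))" for w
    using row1_matD_exact[OF assms(1,2) rn] by (simp add: dk_def)
  have later: "modf2 (x ^ n + y ^ n) (dk a n r x y k w) (0, 0) \<longleftrightarrow>
      (\<exists>z. modf2 (x ^ n + y ^ n) w (dk a n r x y (Suc k) z))" for k w
    using matD_matDc_exact[OF rn assms(4)] by (cases "even k") (simp_all add: dk_def)
  show ?thesis using idealN_row1_image first later by blast
qed

end
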